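(* Let $R$ be an irreducible root lattice of type $A_n$ $(n\ge 1)$, $D_n$ $(n\ge 4)$, $E_6$, $E_7$ or $E_8$, with roots of squared norm $2$, let $h$ be its Coxeter number, and let $R^*=\{\alpha\in\mathbb{Q}\otimes_{\mathbb{Z}}R : \langle \alpha,R\rangle\subset\mathbb{Z}\}$ be its dual lattice. Let $\gamma+R$ be a coset of $R$ in $R^*$ and put $k=\min\{\langle\alpha,\alpha\rangle : \alpha\in\gamma+R\}$. For any $\eta\in\gamma+R$ with $\langle\eta,\eta\rangle=k$, define \[X_\eta=\{(\alpha,\beta)\in R\times(\gamma+R) : \langle\alpha,\alpha\rangle=2,\ \langle\beta,\beta\rangle=k,\ \alpha+\beta=\eta\}.\] Then $|X_\eta|=kh$.
   Context: The Coxeter numbers are $h=n+1$ for $A_n$, $h=2n-2$ for $D_n$, and $h=12,18,30$ for $E_6,E_7,E_8$ respectively. *)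

theory Defs
  imports Complex_Main
begin

text \<open>Vectors of Euclidean space R^m are modelled as functions nat => real that vanish
outside the coordinates 0..m-1. Each irreducible root lattice is given by its standard
model with roots of squared norm 2.\<close>

datatype root_type = TypeA nat | TypeD nat | TypeE6 | TypeE7 | TypeE8

definition ip :: "nat \<Rightarrow> (nat \<Rightarrow> real) \<Rightarrow> (nat \<Rightarrow> real) \<Rightarrow> real" where
  "ip m x y = (\<Sum>i<m. x i * y i)"

definition vadd :: "(nat \<Rightarrow> real) \<Rightarrow> (nat \<Rightarrow> real) \<Rightarrow> (nat \<Rightarrow> real)" where
  "vadd x y = (\<lambda>i. x i + y i)"

definition int_vecs :: "nat \<Rightarrow> (nat \<Rightarrow> real) set" where
  "int_vecs m = {x. (\<forall>i<m. x i \<in> \<int>) \<and> (\<forall>i\<ge>m. x i = 0)}"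

definition A_lattice :: "nat \<Rightarrow> (nat \<Rightarrow> real) set" where
  "A_lattice n = {x \<in> int_vecs (n+1). (\<Sum>i<n+1. x i) = 0}"

definition D_lattice :: "nat \<Rightarrow> (nat \<Rightarrow> real) set" where
  "D_lattice n = {x \<in> int_vecs n. \<exists>k::int. (\<Sum>i<n. x i) = 2 * of_int k}"

definition half8 :: "nat \<Rightarrow> real" where
  "half8 = (\<lambda>i. if i < 8 then 1/2 else 0)"

definition E8_lattice :: "(nat \<Rightarrow> real) set" where
  "E8_lattice = D_lattice 8 \<union> (\<lambda>x. vadd x half8) ` D_lattice 8"

text \<open>E7: orthogonal complement in E8 of the root half8.\<close>
definition E7_lattice :: "(nat \<Rightarrow> real) set" where
  "E7_lattice = {x \<in> E8_lattice. ip 8 x half8 = 0}"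

text \<open>E6: orthogonal complement in E8 of the A2 spanned by the roots half8 and -e1-e2.\<close>
definition E6_lattice :: "(nat \<Rightarrow> real) set" where
  "E6_lattice = {x \<in> E7_lattice. ip 8 x (\<lambda>i. if i < 2 then -1 else 0) = 0}"

fun rt_dim :: "root_type \<Rightarrow> nat" where
  "rt_dim (TypeA n) = n + 1"
| "rt_dim (TypeD n) = n"
| "rt_dim TypeE6 = 8"
| "rt_dim TypeE7 = 8"
| "rt_dim TypeE8 = 8"

fun root_lattice :: "root_type \<Rightarrow> (nat \<Rightarrow> real) set" where
  "root_lattice (TypeA n) = A_lattice n"
| "root_lattice (TypeD n) = D_lattice n"
| "root_lattice TypeE6 = E6_lattice"
| "root_lattice TypeE7 = E7_lattice"
| "root_lattice TypeE8 = E8_lattice"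

fun valid_type :: "root_type \<Rightarrow> bool" where
  "valid_type (TypeA n) = (n \<ge> 1)"
| "valid_type (TypeD n) = (n \<ge> 4)"
| "valid_type TypeE6 = True"
| "valid_type TypeE7 = True"
| "valid_type TypeE8 = True"

fun coxeter_number :: "root_type \<Rightarrow> nat" where
  "coxeter_number (TypeA n) = n + 1"
| "coxeter_number (TypeD n) = 2 * n - 2"
| "coxeter_number TypeE6 = 12"
| "coxeter_number TypeE7 = 18"
| "coxeter_number TypeE8 = 30"

text \<open>Q \<otimes>_Z R, realised inside the ambient space as the rational span of R.\<close>
definition rat_span :: "(nat \<Rightarrow> real) set \<Rightarrow> (nat \<Rightarrow> real) set" where
  "rat_span S = {v. \<exists>F c. finite F \<and> F \<subseteq> S \<and> (\<forall>r\<in>F. c r \<in> \<rat>) \<and>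
                         v = (\<lambda>i. \<Sum>r\<in>F. c r * r i)}"

definition dual_lattice :: "root_type \<Rightarrow> (nat \<Rightarrow> real) set" where
  "dual_lattice t = {v \<in> rat_span (root_lattice t).
                      \<forall>r\<in>root_lattice t. ip (rt_dim t) v r \<in> \<int>}"

definition coset :: "(nat \<Rightarrow> real) \<Rightarrow> (nat \<Rightarrow> real) set \<Rightarrow> (nat \<Rightarrow> real) set" where
  "coset g L = (\<lambda>a. vadd g a) ` L"

definition X_set :: "root_type \<Rightarrow> (nat \<Rightarrow> real) \<Rightarrow> real \<Rightarrow> (nat \<Rightarrow> real)
                     \<Rightarrow> ((nat \<Rightarrow> real) \<times> (nat \<Rightarrow> real)) set" where
  "X_set t g k eta = {(a, b). a \<in> root_lattice t \<and> b \<in> coset g (root_lattice t) \<and>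
       ip (rt_dim t) a a = 2 \<and> ip (rt_dim t) b b = k \<and> vadd a b = eta}"

end

theory Submission
  imports Defs
begin

(* Let eta have minimal norm k in its coset gamma + R and let a be a root. Then eta - a and
   eta + a lie in the same coset, so |<eta, a>| <= 1, and <eta, a> is an integer because gamma
   is in the dual lattice. A pair (a, b) in X_eta is determined by a, and b = eta - a has norm k
   exactly when <eta, a> = 1. Since the roots come in pairs +-a, this gives
   sum_a <eta, a>^2 = 2 |X_eta|. On the other hand sum_a <x, a>^2 = 2h <x, x> for every x in the
   rational span of R, which is verified on the explicit models (for the half-integral roots of
   E8, E7 and E6 by counting sign patterns). Hence 2 |X_eta| = 2hk. *)

lemma ip_sym: "ip m a b = ip m b a"
  by (simp add: ip_def mult.commute)

lemma ip_vadd_left: "ip m (vadd a b) c = ip m a c + ip m b c"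
  by (simp add: ip_def vadd_def sum.distrib algebra_simps)

lemma ip_vadd_right: "ip m a (vadd b c) = ip m a b + ip m a c"
  by (simp add: ip_def vadd_def sum.distrib algebra_simps)

lemma vadd_commute: "vadd a b = vadd b a"
  by (simp add: vadd_def add.commute)

lemma sum_vadd: "(\<Sum>i<m. vadd a b i) = (\<Sum>i<m. a i) + (\<Sum>i<m. b i)"
  by (simp add: vadd_def sum.distrib)

lemma ip_uminus_left: "ip m (\<lambda>i. - a i) b = - ip m a b"
  by (simp add: ip_def sum_negf)

lemma ip_uminus_right: "ip m a (\<lambda>i. - b i) = - ip m a b"
  by (simp add: ip_def sum_negf)

lemma ip_self_eq_sum_power2: "ip m x x = (\<Sum>i<m. (x i)\<^sup>2)"
  by (simp add: ip_def power2_eq_square)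

lemma ip_self_nonneg: "0 \<le> ip m x x"
  by (simp add: ip_def sum_nonneg)

lemma ip_self_vadd: "ip m (vadd x y) (vadd x y) = ip m x x + 2 * ip m x y + ip m y y"
  by (simp add: ip_def vadd_def sum.distrib sum_distrib_left algebra_simps)

lemma ip_self_diff:
  "ip m (\<lambda>i. x i - y i) (\<lambda>i. x i - y i) = ip m x x - 2 * ip m x y + ip m y y"
  by (simp add: ip_def sum_subtractf sum.distrib sum_distrib_left algebra_simps)

lemma Ints_power2_le_2_cases:
  fixes z :: real
  assumes "z \<in> \<int>" "z\<^sup>2 \<le> 2"
  shows "z \<in> {-1, 0, 1}"
proof -
  obtain n :: int where n: "z = of_int n" using assms(1) Ints_cases by blast
  then have "n\<^sup>2 \<le> 2" using assms(2) by (metis of_int_le_iff of_int_numeral of_int_power)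
  have "\<bar>n\<bar> < 2"
  proof (rule ccontr)
    assume "\<not> \<bar>n\<bar> < 2"
    then have "2 * 2 \<le> \<bar>n\<bar> * \<bar>n\<bar>" by (intro mult_mono) auto
    with \<open>n\<^sup>2 \<le> 2\<close> show False by (simp add: power2_eq_square abs_mult_self_eq)
  qed
  then have "n \<in> {-1, 0, 1}" by auto
  then show ?thesis using n by auto
qed

lemma rat_span_vadd_mem:
  assumes "v \<in> rat_span S" "r \<in> S"
  shows "vadd v r \<in> rat_span S"
proof -
  obtain F c where F: "finite F" "F \<subseteq> S" "\<forall>s\<in>F. c s \<in> \<rat>" "v = (\<lambda>i. \<Sum>s\<in>F. c s * s i)"
    using assms(1) unfolding rat_span_def by blast
  define c' where "c' s = (if s \<in> F then c s else 0) + (if s = r then 1 else 0)" for s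
  have "vadd v r = (\<lambda>i. \<Sum>s\<in>insert r F. c' s * s i)"
  proof
    fix i
    have "(\<Sum>s\<in>insert r F. c' s * s i)
        = (\<Sum>s\<in>insert r F. (if s \<in> F then c s * s i else 0) + (if s = r then s i else 0))"
      by (rule sum.cong) (simp_all add: c'_def distrib_right)
    also have "\<dots> = (\<Sum>s\<in>F. c s * s i) + r i"
      using F(1) by (simp add: sum.distrib sum.If_cases Int_absorb1[OF subset_insertI])
    finally show "vadd v r i = (\<Sum>s\<in>insert r F. c' s * s i)" by (simp add: vadd_def F(4))
  qed
  moreover have "\<forall>s\<in>insert r F. c' s \<in> \<rat>" using F(3) by (simp add: c'_def)
  ultimately show ?thesis
    unfolding rat_span_def using F(1,2) assms(2)
    by (intro CollectI exI[of _ "insert r F"] exI[of _ c']) auto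
qed

lemma coset_subset_rat_span:
  assumes "g \<in> rat_span L"
  shows "coset g L \<subseteq> rat_span L"
proof
  fix x assume "x \<in> coset g L"
  then obtain a where "a \<in> L" "x = vadd g a" by (auto simp: coset_def)
  then show "x \<in> rat_span L" using rat_span_vadd_mem[OF assms] by simp
qed

lemma ip_rat_span_eq_0:
  assumes "v \<in> rat_span S" "\<And>r. r \<in> S \<Longrightarrow> ip m r y = 0"
  shows "ip m v y = 0"
proof -
  obtain F c where F: "finite F" "F \<subseteq> S" "v = (\<lambda>i. \<Sum>r\<in>F. c r * r i)"
    using assms(1) unfolding rat_span_def by blast
  have "ip m v y = (\<Sum>i<m. \<Sum>r\<in>F. c r * (r i * y i))"
    by (simp add: ip_def F(3) sum_distrib_right mult.assoc)
  also have "\<dots> = (\<Sum>r\<in>F. c r * ip m r y)"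
    by (subst sum.swap) (simp add: ip_def sum_distrib_left)
  also have "\<dots> = 0" using F(2) assms(2) by (auto intro!: sum.neutral)
  finally show ?thesis .
qed

section \<open>Integral lattices and minimal vectors of a coset\<close>

definition roots :: "nat \<Rightarrow> (nat \<Rightarrow> real) set \<Rightarrow> (nat \<Rightarrow> real) set" where
  "roots m L = {a \<in> L. ip m a a = 2}"

locale integral_lattice =
  fixes m :: nat and L :: "(nat \<Rightarrow> real) set"
  assumes vadd_mem: "a \<in> L \<Longrightarrow> b \<in> L \<Longrightarrow> vadd a b \<in> L"
    and uminus_mem: "a \<in> L \<Longrightarrow> (\<lambda>i. - a i) \<in> L"
    and ip_Ints: "a \<in> L \<Longrightarrow> b \<in> L \<Longrightarrow> ip m a b \<in> \<int>"
begin

lemma coset_vadd_mem: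
  assumes "eta \<in> coset g L" "a \<in> L"
  shows "vadd eta a \<in> coset g L"
proof -
  obtain r where r: "r \<in> L" "eta = vadd g r" using assms(1) by (auto simp: coset_def)
  have "vadd eta a = vadd g (vadd r a)" by (simp add: r vadd_def add.assoc)
  then show ?thesis using vadd_mem[OF r(1) assms(2)] by (simp add: coset_def)
qed

lemma coset_diff_mem:
  assumes "eta \<in> coset g L" "a \<in> L"
  shows "(\<lambda>i. eta i - a i) \<in> coset g L"
  using coset_vadd_mem[OF assms(1) uminus_mem[OF assms(2)]] by (simp add: vadd_def)

lemma ip_coset_Ints:
  assumes "\<And>r. r \<in> L \<Longrightarrow> ip m g r \<in> \<int>" "eta \<in> coset g L" "a \<in> L"
  shows "ip m eta a \<in> \<int>"
proof -
  obtain r where "r \<in> L" "eta = vadd g r" using assms(2) by (auto simp: coset_def)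
  then show ?thesis using assms(1,3) ip_Ints by (simp add: ip_vadd_left)
qed

lemma ip_minimal_root_cases:
  assumes dual: "\<And>r. r \<in> L \<Longrightarrow> ip m g r \<in> \<int>"
    and eta: "eta \<in> coset g L" and minimal: "\<forall>b\<in>coset g L. ip m eta eta \<le> ip m b b"
    and a: "a \<in> roots m L"
  shows "ip m eta a \<in> {-1, 0, 1}"
proof -
  have aL: "a \<in> L" "ip m a a = 2" using a by (auto simp: roots_def)
  have "ip m eta eta \<le> ip m (\<lambda>i. eta i - a i) (\<lambda>i. eta i - a i)"
    using minimal coset_diff_mem[OF eta aL(1)] by blast
  moreover have "ip m eta eta \<le> ip m (vadd eta a) (vadd eta a)"
    using minimal coset_vadd_mem[OF eta aL(1)] by blast
  ultimately have "\<bar>ip m eta a\<bar> \<le> 1"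
    using aL(2) by (simp add: ip_self_diff ip_self_vadd)
  then have "(ip m eta a)\<^sup>2 \<le> 2" using abs_square_le_1[of "ip m eta a"] by linarith
  then show ?thesis using Ints_power2_le_2_cases ip_coset_Ints[OF dual eta aL(1)] by blast
qed

text \<open>Since \<open>\<langle>a, a\<rangle> = 2\<close>, the vector \<open>b = eta - a\<close> has the norm of \<open>eta\<close>
  iff \<open>\<langle>eta, a\<rangle> = 1\<close>.\<close>
lemma card_decompositions:
  assumes eta: "eta \<in> coset g L"
  shows "card {(a, b). a \<in> L \<and> b \<in> coset g L \<and> ip m a a = 2 \<and> ip m b b = ip m eta eta
                        \<and> vadd a b = eta}
       = card {a \<in> roots m L. ip m eta a = 1}" (is "card ?X = card ?P")
proof -
  have "?X = (\<lambda>a. (a, \<lambda>i. eta i - a i)) ` ?P"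
  proof (intro set_eqI iffI)
    fix p assume "p \<in> ?X"
    then obtain a b where p: "p = (a, b)" "a \<in> L" "ip m a a = 2" "ip m b b = ip m eta eta"
      "vadd a b = eta"
      by auto
    have b: "b = (\<lambda>i. eta i - a i)" using p(5) by (auto simp: vadd_def)
    have "ip m eta a = 1" using p(3,4) b by (simp add: ip_self_diff)
    then show "p \<in> (\<lambda>a. (a, \<lambda>i. eta i - a i)) ` ?P" using p b by (auto simp: roots_def)
  next
    fix p assume "p \<in> (\<lambda>a. (a, \<lambda>i. eta i - a i)) ` ?P"
    then obtain a where a: "a \<in> L" "ip m a a = 2" "ip m eta a = 1" "p = (a, \<lambda>i. eta i - a i)"
      by (auto simp: roots_def)
    then show "p \<in> ?X" using coset_diff_mem[OF eta] by (auto simp: ip_self_diff vadd_def)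
  qed
  moreover have "inj_on (\<lambda>a. (a, \<lambda>i. eta i - a i)) ?P" by (rule inj_onI) simp
  ultimately show ?thesis by (simp add: card_image)
qed

lemma sum_power2_ip_roots_minimal:
  assumes fin: "finite (roots m L)"
    and dual: "\<And>r. r \<in> L \<Longrightarrow> ip m g r \<in> \<int>"
    and eta: "eta \<in> coset g L" and minimal: "\<forall>b\<in>coset g L. ip m eta eta \<le> ip m b b"
  shows "(\<Sum>a\<in>roots m L. (ip m eta a)\<^sup>2) = 2 * real (card {a \<in> roots m L. ip m eta a = 1})"
proof -
  define P where "P = {a \<in> roots m L. ip m eta a = 1}"
  define N where "N = {a \<in> roots m L. ip m eta a = -1}"
  have "(\<Sum>a\<in>roots m L. (ip m eta a)\<^sup>2) = (\<Sum>a\<in>roots m L. of_bool (a \<in> P) + of_bool (a \<in> N))"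
    using ip_minimal_root_cases[OF dual eta minimal] by (intro sum.cong) (auto simp: P_def N_def)
  also have "\<dots> = real (card P) + real (card N)"
    using fin by (simp add: sum.distrib P_def N_def Int_def)
  also have "N = (\<lambda>a i. - a i) ` P"
  proof (intro equalityI subsetI)
    fix a assume "a \<in> N"
    then have "(\<lambda>i. - a i) \<in> P"
      by (auto simp: N_def P_def roots_def uminus_mem ip_uminus_left ip_uminus_right
          ip_sym[of m eta])
    then show "a \<in> (\<lambda>a i. - a i) ` P" by (intro image_eqI[of a _ "\<lambda>i. - a i"]) simp_all
  qed (auto simp: N_def P_def roots_def uminus_mem ip_uminus_left ip_uminus_right ip_sym[of m eta])
  also have "card ((\<lambda>a i. - a i) ` P) = card P"
    by (rule card_image) (auto simp: inj_on_def fun_eq_iff)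
  finally show ?thesis by (simp add: P_def)
qed

theorem card_minimal_decompositions:
  assumes "finite (roots m L)"
    and "\<And>r. r \<in> L \<Longrightarrow> ip m g r \<in> \<int>"
    and "eta \<in> coset g L" and "\<forall>b\<in>coset g L. ip m eta eta \<le> ip m b b"
    and "(\<Sum>a\<in>roots m L. (ip m eta a)\<^sup>2) = 2 * h * ip m eta eta"
  shows "real (card {(a, b). a \<in> L \<and> b \<in> coset g L \<and> ip m a a = 2 \<and> ip m b b = ip m eta eta
                              \<and> vadd a b = eta}) = ip m eta eta * h"
  using sum_power2_ip_roots_minimal[OF assms(1-4)] card_decompositions[OF assms(3)] assms(5)
  by (simp add: mult.commute)

lemma integral_lattice_Un_coset:
  assumes hh: "vadd h h \<in> L"
    and ip_h: "\<And>r. r \<in> L \<Longrightarrow> ip m h r \<in> \<int>" and "ip m h h \<in> \<int>"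
  shows "integral_lattice m (L \<union> coset h L)"
proof
  have mem_iff: "x \<in> L \<union> coset h L \<longleftrightarrow> (\<exists>a\<in>L. x = a \<or> x = vadd h a)" for x
    by (auto simp: coset_def)
  fix x y assume "x \<in> L \<union> coset h L" "y \<in> L \<union> coset h L"
  then obtain a b where ab: "a \<in> L" "b \<in> L" "x = a \<or> x = vadd h a" "y = b \<or> y = vadd h b"
    unfolding mem_iff by blast
  have "vadd a b \<in> L" "vadd (vadd h h) (vadd a b) \<in> L"
    using ab(1,2) hh by (simp_all add: vadd_mem)
  moreover have "vadd (vadd h a) b = vadd h (vadd a b)" "vadd a (vadd h b) = vadd h (vadd a b)"
    "vadd (vadd h a) (vadd h b) = vadd (vadd h h) (vadd a b)"
    by (simp_all add: vadd_def algebra_simps)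
  ultimately show "vadd x y \<in> L \<union> coset h L"
    using ab(3,4) unfolding mem_iff by blast
  have "ip m a b \<in> \<int>" "ip m h a \<in> \<int>" "ip m h b \<in> \<int>"
    using ab(1,2) ip_h ip_Ints by simp_all
  then show "ip m x y \<in> \<int>"
    using ab(3,4) assms(3) by (auto simp: ip_vadd_left ip_vadd_right ip_sym[of m a h])
next
  fix x assume "x \<in> L \<union> coset h L"
  then consider "x \<in> L" | a where "a \<in> L" "x = vadd h a" by (auto simp: coset_def)
  then show "(\<lambda>i. - x i) \<in> L \<union> coset h L"
  proof cases
    case 1
    then show ?thesis by (simp add: uminus_mem)
  next
    case 2
    have "(\<lambda>i. - x i) = vadd h (vadd (\<lambda>i. - vadd h h i) (\<lambda>i. - a i))"
      using 2 by (simp add: vadd_def fun_eq_iff)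
    moreover have "vadd (\<lambda>i. - vadd h h i) (\<lambda>i. - a i) \<in> L"
      using 2 hh by (simp add: vadd_mem uminus_mem)
    ultimately show ?thesis by (simp add: coset_def)
  qed
qed

lemma integral_lattice_orthogonal: "integral_lattice m {x \<in> L. ip m x w = 0}"
  by unfold_locales (auto simp: vadd_mem uminus_mem ip_Ints ip_vadd_left ip_uminus_left)

end

section \<open>The root systems of types A and D\<close>

lemma sum_eq_ip_ones: "(\<Sum>i<m. a i) = ip m (\<lambda>_. 1) a"
  by (simp add: ip_def)

lemma integral_lattice_subset_int_vecs:
  assumes "L \<subseteq> int_vecs m"
    and "\<And>a b. a \<in> L \<Longrightarrow> b \<in> L \<Longrightarrow> vadd a b \<in> L"
    and "\<And>a. a \<in> L \<Longrightarrow> (\<lambda>i. - a i) \<in> L"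
  shows "integral_lattice m L"
proof
  fix a b assume "a \<in> L" "b \<in> L"
  then have "\<forall>i<m. a i \<in> \<int>" "\<forall>i<m. b i \<in> \<int>" using assms(1) by (auto simp: int_vecs_def)
  then show "ip m a b \<in> \<int>" unfolding ip_def by (intro Ints_sum Ints_mult) auto
qed (use assms in auto)

lemma integral_lattice_A_lattice: "integral_lattice (n + 1) (A_lattice n)"
  by (rule integral_lattice_subset_int_vecs)
    (auto simp: A_lattice_def int_vecs_def vadd_def sum.distrib sum_negf)

lemma integral_lattice_D_lattice: "integral_lattice n (D_lattice n)"
proof (rule integral_lattice_subset_int_vecs)
  fix a b assume "a \<in> D_lattice n" "b \<in> D_lattice n"
  then obtain k l :: int where "(\<Sum>i<n. a i) = 2 * of_int k" "(\<Sum>i<n. b i) = 2 * of_int l"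
    "a \<in> int_vecs n" "b \<in> int_vecs n"
    by (auto simp: D_lattice_def)
  then show "vadd a b \<in> D_lattice n"
    by (auto simp: D_lattice_def int_vecs_def vadd_def sum.distrib intro!: exI[of _ "k + l"])
next
  fix a assume "a \<in> D_lattice n"
  then obtain k :: int where "(\<Sum>i<n. a i) = 2 * of_int k" "a \<in> int_vecs n"
    by (auto simp: D_lattice_def)
  then show "(\<lambda>i. - a i) \<in> D_lattice n"
    by (auto simp: D_lattice_def int_vecs_def sum_negf intro!: exI[of _ "- k"])
qed (auto simp: D_lattice_def)

definition pair_vec :: "nat \<Rightarrow> nat \<Rightarrow> real \<Rightarrow> real \<Rightarrow> nat \<Rightarrow> real" where
  "pair_vec i j s t = (\<lambda>l. if l = i then s else if l = j then t else 0)"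

lemma ip_pair_vec:
  assumes "i \<noteq> j" "i < m" "j < m"
  shows "ip m x (pair_vec i j s t) = s * x i + t * x j"
proof -
  have "ip m x (pair_vec i j s t)
      = (\<Sum>l<m. (if l = i then s * x i else 0) + (if l = j then t * x j else 0))"
    unfolding ip_def pair_vec_def using assms(1) by (intro sum.cong) auto
  then show ?thesis using assms(2,3) by (simp add: sum.distrib)
qed

definition increasing_pairs :: "nat \<Rightarrow> (nat \<times> nat) set" where
  "increasing_pairs n = {(i, j). i < j \<and> j < n}"

definition D_root_params :: "nat \<Rightarrow> ((nat \<times> nat) \<times> real \<times> real) set" where
  "D_root_params n = increasing_pairs n \<times> ({1, -1} \<times> {1, -1})"

fun D_root :: "(nat \<times> nat) \<times> real \<times> real \<Rightarrow> nat \<Rightarrow> real" where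
  "D_root ((i, j), s, t) = pair_vec i j s t"

definition off_diagonal :: "nat set \<Rightarrow> (nat \<times> nat) set" where
  "off_diagonal I = {(i, j). i \<in> I \<and> j \<in> I \<and> i \<noteq> j}"

fun A_root :: "nat \<times> nat \<Rightarrow> nat \<Rightarrow> real" where
  "A_root (i, j) = pair_vec i j 1 (-1)"

lemma finite_increasing_pairs: "finite (increasing_pairs n)"
  by (rule finite_subset[of _ "{..<n} \<times> {..<n}"]) (auto simp: increasing_pairs_def)

lemma finite_D_root_params: "finite (D_root_params n)"
  by (simp add: D_root_params_def finite_increasing_pairs)

lemma finite_off_diagonal: "finite I \<Longrightarrow> finite (off_diagonal I)"
  by (rule finite_subset[of _ "I \<times> I"]) (auto simp: off_diagonal_def)

lemma inj_on_D_root: "inj_on D_root (D_root_params n)"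
proof (rule inj_onI)
  fix p q assume "p \<in> D_root_params n" "q \<in> D_root_params n" "D_root p = D_root q"
  then obtain i j s t i' j' s' t' where
    p: "p = ((i, j), s, t)" "i < j" "s \<noteq> 0" "t \<noteq> 0" and
    q: "q = ((i', j'), s', t')" "i' < j'" "s' \<noteq> 0" "t' \<noteq> 0" and
    eq: "\<And>l. pair_vec i j s t l = pair_vec i' j' s' t' l"
    by (auto simp: D_root_params_def increasing_pairs_def)
  have "i = i'" using eq[of i] eq[of i'] p q by (auto simp: pair_vec_def split: if_splits)
  moreover have "j = j'" using eq[of j] eq[of j'] p q by (auto simp: pair_vec_def split: if_splits)
  ultimately show "p = q" using eq[of i] eq[of j] p q by (auto simp: pair_vec_def)
qed

lemma inj_on_A_root: "inj_on A_root (off_diagonal I)"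
proof (rule inj_onI)
  fix p q assume "p \<in> off_diagonal I" "q \<in> off_diagonal I" "A_root p = A_root q"
  then obtain i j i' j' where p: "p = (i, j)" "i \<noteq> j" and q: "q = (i', j')" "i' \<noteq> j'"
    and eq: "\<And>l. pair_vec i j 1 (-1) l = pair_vec i' j' 1 (-1) l"
    by (auto simp: off_diagonal_def)
  have "i = i'" using eq[of i] p q by (auto simp: pair_vec_def split: if_splits)
  moreover have "j = j'" using eq[of j] p q by (auto simp: pair_vec_def split: if_splits)
  ultimately show "p = q" using p q by simp
qed

lemma int_vec_norm2_eq_pair_vec:
  assumes x: "x \<in> int_vecs m" and norm: "ip m x x = 2"
  obtains i j where "i < j" "j < m" "x i \<in> {1, -1}" "x j \<in> {1, -1}" "x = pair_vec i j (x i) (x j)"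
proof -
  have coord: "x i \<in> {-1, 0, 1}" if "i < m" for i
  proof (rule Ints_power2_le_2_cases)
    show "x i \<in> \<int>" using x that by (simp add: int_vecs_def)
    have "(x i)\<^sup>2 \<le> (\<Sum>l<m. (x l)\<^sup>2)" by (rule member_le_sum) (use that in auto)
    then show "(x i)\<^sup>2 \<le> 2" using norm by (simp add: ip_self_eq_sum_power2)
  qed
  define S where "S = {i. i < m \<and> x i \<noteq> 0}"
  have "2 = (\<Sum>l<m. (x l)\<^sup>2)" using norm by (simp add: ip_self_eq_sum_power2)
  also have "\<dots> = (\<Sum>l<m. of_bool (x l \<noteq> 0))"
  proof (rule sum.cong)
    fix l assume "l \<in> {..<m}"
    then show "(x l)\<^sup>2 = of_bool (x l \<noteq> 0)" using coord[of l] by auto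
  qed simp
  also have "\<dots> = real (card S)" by (simp add: S_def Int_def)
  finally have "card S = 2" by linarith
  then obtain p q where "S = {p, q}" "p \<noteq> q" by (auto simp: card_2_iff)
  then obtain i j where ij: "S = {i, j}" "i < j"
    by (metis insert_commute linorder_neqE_nat)
  then have "i < m" "j < m" "x i \<noteq> 0" "x j \<noteq> 0" by (auto simp: S_def)
  then have "x i \<in> {1, -1}" "x j \<in> {1, -1}" using coord by auto
  moreover have "x = pair_vec i j (x i) (x j)"
  proof
    fix l
    show "x l = pair_vec i j (x i) (x j) l"
      using ij x by (cases "l < m") (auto simp: S_def pair_vec_def int_vecs_def)
  qed
  ultimately show ?thesis using that ij(2) \<open>j < m\<close> by blast
qed

lemma roots_int_vecs: "roots m (int_vecs m) = D_root ` D_root_params m"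
proof (intro equalityI subsetI)
  fix x assume "x \<in> roots m (int_vecs m)"
  then obtain i j where "i < j" "j < m" "x i \<in> {1, -1}" "x j \<in> {1, -1}"
    "x = D_root ((i, j), x i, x j)"
    by (auto simp: roots_def elim!: int_vec_norm2_eq_pair_vec)
  then show "x \<in> D_root ` D_root_params m"
    by (intro image_eqI[of _ _ "((i, j), x i, x j)"])
      (auto simp: D_root_params_def increasing_pairs_def)
next
  fix x assume "x \<in> D_root ` D_root_params m"
  then obtain i j s t where "x = pair_vec i j s t" "i < j" "j < m" "s \<in> {1, -1}" "t \<in> {1, -1}"
    by (auto simp: D_root_params_def increasing_pairs_def)
  then show "x \<in> roots m (int_vecs m)"
    by (auto simp: roots_def int_vecs_def ip_pair_vec) (auto simp: pair_vec_def)
qed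

lemma sum_D_root: "p \<in> D_root_params m \<Longrightarrow> (\<Sum>l<m. D_root p l) = fst (snd p) + snd (snd p)"
  by (auto simp: D_root_params_def increasing_pairs_def sum_eq_ip_ones ip_pair_vec)

lemma roots_D_lattice: "roots n (D_lattice n) = D_root ` D_root_params n"
proof -
  have "D_root p \<in> D_lattice n" if p: "p \<in> D_root_params n" for p
  proof -
    have "D_root p \<in> int_vecs n" using p roots_int_vecs by (auto simp: roots_def)
    moreover have "(\<Sum>l<n. D_root p l) \<in> {2, 0, -2}"
      using p sum_D_root[OF p] by (auto simp: D_root_params_def)
    then have "\<exists>k::int. (\<Sum>l<n. D_root p l) = 2 * of_int k"
      by (auto intro: exI[of _ 1] exI[of _ 0] exI[of _ "-1"])
    ultimately show ?thesis by (simp add: D_lattice_def)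
  qed
  then show ?thesis
    using roots_int_vecs[of n] by (auto simp: roots_def D_lattice_def)
qed

lemma roots_int_vecs_sum_eq_0:
  "{a \<in> roots m (int_vecs m). (\<Sum>l<m. a l) = 0} = A_root ` off_diagonal {..<m}"
proof (intro equalityI subsetI)
  fix a assume "a \<in> {a \<in> roots m (int_vecs m). (\<Sum>l<m. a l) = 0}"
  then obtain i j s t where a: "a = pair_vec i j s t" "i < j" "j < m" "s \<in> {1, -1}" "t \<in> {1, -1}"
    and "s + t = 0"
    using sum_D_root unfolding roots_int_vecs
    by (fastforce simp: D_root_params_def increasing_pairs_def)
  then consider "s = 1" "t = -1" | "s = -1" "t = 1" by auto
  then show "a \<in> A_root ` off_diagonal {..<m}"
  proof cases
    case 1
    then show ?thesis using a by (intro image_eqI[of _ _ "(i, j)"]) (auto simp: off_diagonal_def)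
  next
    case 2
    then have "a = A_root (j, i)" using a by (auto simp: pair_vec_def)
    then show ?thesis using a by (intro image_eqI[of _ _ "(j, i)"]) (auto simp: off_diagonal_def)
  qed
next
  fix a assume "a \<in> A_root ` off_diagonal {..<m}"
  then obtain i j where a: "a = pair_vec i j 1 (-1)" "i \<noteq> j" "i < m" "j < m"
    by (auto simp: off_diagonal_def)
  then show "a \<in> {a \<in> roots m (int_vecs m). (\<Sum>l<m. a l) = 0}"
    by (auto simp: roots_def int_vecs_def ip_pair_vec sum_eq_ip_ones) (auto simp: pair_vec_def)
qed

lemma roots_A_lattice: "roots (n + 1) (A_lattice n) = A_root ` off_diagonal {..<n + 1}"
  unfolding roots_int_vecs_sum_eq_0[symmetric] by (auto simp: roots_def A_lattice_def)

lemma sum_power2_ip_A_roots: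
  assumes "finite I" "I \<subseteq> {..<m}"
  shows "(\<Sum>a\<in>A_root ` off_diagonal I. (ip m x a)\<^sup>2)
       = 2 * real (card I) * (\<Sum>i\<in>I. (x i)\<^sup>2) - 2 * (\<Sum>i\<in>I. x i)\<^sup>2"
proof -
  have less_m: "i \<in> I \<Longrightarrow> i < m" for i using assms(2) by auto
  have "(\<Sum>a\<in>A_root ` off_diagonal I. (ip m x a)\<^sup>2) = (\<Sum>(i, j)\<in>off_diagonal I. (x i - x j)\<^sup>2)"
    by (subst sum.reindex[OF inj_on_A_root])
      (auto intro!: sum.cong simp: off_diagonal_def ip_pair_vec less_m)
  also have "\<dots> = (\<Sum>(i, j)\<in>I \<times> I. (x i - x j)\<^sup>2)"
    by (rule sum.mono_neutral_left) (use assms(1) in \<open>auto simp: off_diagonal_def\<close>)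
  also have "\<dots> = (\<Sum>i\<in>I. \<Sum>j\<in>I. (x i)\<^sup>2 + (x j)\<^sup>2 - 2 * (x i * x j))"
    by (simp add: sum.cartesian_product power2_diff mult.assoc)
  also have "\<dots> = 2 * real (card I) * (\<Sum>i\<in>I. (x i)\<^sup>2) - 2 * (\<Sum>i\<in>I. x i)\<^sup>2"
    by (simp add: sum.distrib sum_subtractf sum_distrib_left sum_distrib_right power2_eq_square
        algebra_simps)
  finally show ?thesis .
qed

lemma sum_increasing_pairs:
  fixes f :: "nat \<Rightarrow> real"
  shows "(\<Sum>(i, j)\<in>increasing_pairs n. f i + f j) = (real n - 1) * (\<Sum>i<n. f i)"
proof (induction n)
  case 0
  then show ?case by (simp add: increasing_pairs_def)
next
  case (Suc n)
  have "increasing_pairs (Suc n) = increasing_pairs n \<union> (\<lambda>i. (i, n)) ` {..<n}"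
    by (auto simp: increasing_pairs_def)
  moreover have "increasing_pairs n \<inter> (\<lambda>i. (i, n)) ` {..<n} = {}"
    by (auto simp: increasing_pairs_def)
  ultimately have "(\<Sum>(i, j)\<in>increasing_pairs (Suc n). f i + f j)
      = (\<Sum>(i, j)\<in>increasing_pairs n. f i + f j) + (\<Sum>i<n. f i + f n)"
    by (simp add: sum.union_disjoint finite_increasing_pairs sum.reindex inj_on_def)
  also have "\<dots> = (real (Suc n) - 1) * (\<Sum>i<Suc n. f i)"
    using Suc by (simp add: sum.distrib algebra_simps)
  finally show ?case .
qed

lemma sum_power2_ip_D_roots:
  "(\<Sum>a\<in>D_root ` D_root_params n. (ip n x a)\<^sup>2) = 4 * (real n - 1) * ip n x x"
proof -
  have "(\<Sum>a\<in>D_root ` D_root_params n. (ip n x a)\<^sup>2) = (\<Sum>p\<in>D_root_params n. (ip n x (D_root p))\<^sup>2)"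
    by (simp add: sum.reindex[OF inj_on_D_root])
  also have "\<dots> = (\<Sum>(i, j)\<in>increasing_pairs n. \<Sum>(s, t)\<in>{1, -1} \<times> {1, -1}. (s * x i + t * x j)\<^sup>2)"
    unfolding D_root_params_def sum.cartesian_product'
    by (intro sum.cong refl) (auto simp: increasing_pairs_def ip_pair_vec)
  also have "\<dots> = 4 * (\<Sum>(i, j)\<in>increasing_pairs n. (x i)\<^sup>2 + (x j)\<^sup>2)"
    by (simp add: sum_distrib_left case_prod_beta power2_eq_square algebra_simps)
  also have "\<dots> = 4 * (real n - 1) * ip n x x"
    by (simp add: sum_increasing_pairs ip_self_eq_sum_power2)
  finally show ?thesis .
qed

lemma sum_power2_ip_roots_A_lattice:
  assumes "x \<in> rat_span (A_lattice n)"
  shows "(\<Sum>a\<in>roots (n + 1) (A_lattice n). (ip (n + 1) x a)\<^sup>2) = 2 * real (n + 1) * ip (n + 1) x x"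
proof -
  have "ip (n + 1) x (\<lambda>_. 1) = 0"
    using assms by (rule ip_rat_span_eq_0) (simp add: A_lattice_def ip_def)
  then have "(\<Sum>i<n + 1. x i) = 0" by (simp add: ip_sym sum_eq_ip_ones)
  then show ?thesis
    unfolding roots_A_lattice by (simp add: sum_power2_ip_A_roots ip_self_eq_sum_power2)
qed

lemma sum_power2_ip_roots_D_lattice:
  "(\<Sum>a\<in>roots n (D_lattice n). (ip n x a)\<^sup>2) = 2 * real (2 * n - 2) * ip n x x"
proof (cases "n = 0")
  case True
  then show ?thesis by (simp add: ip_def)
next
  case False
  then have "real (2 * n - 2) = 2 * (real n - 1)" by (simp add: of_nat_diff)
  then show ?thesis unfolding roots_D_lattice sum_power2_ip_D_roots by simp
qed

section \<open>The root systems of type E\<close>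

lemma sum_half8: "(\<Sum>i<8. half8 i) = 4"
  by (simp add: half8_def)

lemma ip_half8: "ip 8 a half8 = (\<Sum>i<8. a i) / 2"
  by (simp add: ip_def half8_def sum_divide_distrib)

lemma E8_lattice_eq: "E8_lattice = D_lattice 8 \<union> coset half8 (D_lattice 8)"
  by (simp add: E8_lattice_def coset_def vadd_commute)

lemma integral_lattice_E8_lattice: "integral_lattice 8 E8_lattice"
proof -
  interpret D8: integral_lattice 8 "D_lattice 8" by (rule integral_lattice_D_lattice)
  have "vadd half8 half8 \<in> D_lattice 8"
    by (auto simp: D_lattice_def int_vecs_def vadd_def half8_def intro!: exI[of _ 4])
  moreover have "ip 8 half8 r \<in> \<int>" if "r \<in> D_lattice 8" for r
    using that by (auto simp: D_lattice_def ip_sym[of 8 half8] ip_half8)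
  moreover have "ip 8 half8 half8 \<in> \<int>" by (simp add: ip_half8 sum_half8)
  ultimately show ?thesis unfolding E8_lattice_eq by (rule D8.integral_lattice_Un_coset)
qed

lemma integral_lattice_E7_lattice: "integral_lattice 8 E7_lattice"
  unfolding E7_lattice_def
  by (rule integral_lattice.integral_lattice_orthogonal[OF integral_lattice_E8_lattice])

lemma integral_lattice_E6_lattice: "integral_lattice 8 E6_lattice"
  unfolding E6_lattice_def
  by (rule integral_lattice.integral_lattice_orthogonal[OF integral_lattice_E7_lattice])

definition half_vec :: "bool list \<Rightarrow> nat \<Rightarrow> real" where
  "half_vec bs = (\<lambda>i. if i < 8 then if bs ! i then -1/2 else 1/2 else 0)"

definition sign_lists :: "(bool list \<Rightarrow> bool) \<Rightarrow> bool list list" where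
  "sign_lists P = filter P (List.n_lists 8 [False, True])"

lemma set_sign_lists: "set (sign_lists P) = {bs. length bs = 8 \<and> P bs}"
  by (auto simp: sign_lists_def set_n_lists)

lemma distinct_sign_lists: "distinct (sign_lists P)"
  by (simp add: sign_lists_def distinct_n_lists)

lemma sum_half_vec:
  assumes "length bs = 8"
  shows "(\<Sum>i<8. half_vec bs i) = 4 - real (length (filter id bs))"
proof -
  have "(\<Sum>i<8. half_vec bs i) = (\<Sum>i<8. 1/2 - of_bool (bs ! i))"
    by (rule sum.cong) (auto simp: half_vec_def)
  also have "\<dots> = 4 - real (card {i. i < length bs \<and> bs ! i})"
    using assms by (simp add: sum_subtractf Int_def conj_commute)
  finally show ?thesis by (simp add: length_filter_conv_card)
qed

lemma ip_half_vec_self: "ip 8 (half_vec bs) (half_vec bs) = 2"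
proof -
  have "ip 8 (half_vec bs) (half_vec bs) = (\<Sum>i<(8::nat). 1/4::real)"
    unfolding ip_def by (rule sum.cong) (auto simp: half_vec_def)
  then show ?thesis by simp
qed

lemma inj_on_half_vec: "inj_on half_vec {bs. length bs = 8}"
proof (rule inj_onI)
  fix bs cs assume "bs \<in> {bs. length bs = 8}" "cs \<in> {bs. length bs = 8}" "half_vec bs = half_vec cs"
  then show "bs = cs"
    by (intro nth_equalityI) (auto simp: half_vec_def fun_eq_iff split: if_splits)
qed

lemma half_odd_integer_power2_ge:
  fixes z :: real
  assumes "z - 1/2 \<in> \<int>"
  shows "1/4 \<le> z\<^sup>2"
proof -
  obtain n :: int where n: "z = of_int n + 1/2" using assms by (metis Ints_cases diff_add_cancel)
  have "0 \<le> n * (n + 1)" by (cases "0 \<le> n") (auto simp: mult_nonpos_nonpos)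
  then have "0 \<le> real_of_int (n * (n + 1))" by linarith
  then show ?thesis by (simp add: n power2_eq_square algebra_simps)
qed

lemma half_odd_norm2_coordinate:
  assumes half: "\<And>i. i < 8 \<Longrightarrow> x i - 1/2 \<in> \<int>" and norm: "ip 8 x x = 2" and "i < 8"
  shows "x i = 1/2 \<or> x i = -1/2"
proof -
  have "(\<Sum>i<8. (x i)\<^sup>2 - 1/4) = 0" using norm by (simp add: ip_self_eq_sum_power2 sum_subtractf)
  then have "(x i)\<^sup>2 = 1/4"
    using \<open>i < 8\<close> half half_odd_integer_power2_ge by (subst (asm) sum_nonneg_eq_0_iff) auto
  then have "(x i - 1/2) * (x i + 1/2) = 0" by (simp add: power2_eq_square algebra_simps)
  then show ?thesis by force
qed

lemma coset_half8_norm2_eq_half_vec: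
  assumes "x \<in> coset half8 (D_lattice 8)" and norm: "ip 8 x x = 2"
  shows "x \<in> half_vec ` set (sign_lists (\<lambda>bs. even (length (filter id bs))))"
proof -
  obtain d k where d: "d \<in> int_vecs 8" "(\<Sum>i<8. d i) = 2 * of_int k" "x = vadd half8 d"
    using assms(1) by (auto simp: coset_def D_lattice_def)
  have "x i - 1/2 \<in> \<int>" if "i < 8" for i
    using d that by (simp add: int_vecs_def vadd_def half8_def)
  note pm = half_odd_norm2_coordinate[OF this norm]
  define bs where "bs = map (\<lambda>i. x i < 0) [0..<8]"
  have len: "length bs = 8" by (simp add: bs_def)
  have x_eq: "x = half_vec bs"
  proof
    fix i
    show "x i = half_vec bs i"
      using pm[of i] d(1,3)
      by (cases "i < 8") (auto simp: bs_def half_vec_def vadd_def half8_def int_vecs_def)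
  qed
  have "(\<Sum>i<8. x i) = 4 + 2 * of_int k"
    using d(2,3) by (simp add: sum_vadd sum_half8)
  then have "real_of_int (int (length (filter id bs))) = real_of_int (2 * (- k))"
    using sum_half_vec[OF len] x_eq by simp
  then have "int (length (filter id bs)) = 2 * (- k)" by (simp only: of_int_eq_iff)
  then have "even (length (filter id bs))" by (metis dvd_triv_left even_of_nat)
  then show ?thesis using len x_eq by (auto simp: set_sign_lists)
qed

lemma half_vec_mem_coset_half8:
  assumes len: "length bs = 8" and even: "even (length (filter id bs))"
  shows "half_vec bs \<in> coset half8 (D_lattice 8)"
proof -
  define d where "d i = (if i < 8 \<and> bs ! i then -1 else 0 :: real)" for i
  have hv_eq: "half_vec bs = vadd half8 d" by (auto simp: half_vec_def vadd_def half8_def d_def)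
  have "(\<Sum>i<8. d i) = - real (length (filter id bs))"
    using sum_half_vec[OF len] hv_eq by (simp add: sum_vadd sum_half8)
  then have "(\<Sum>i<8. d i) = 2 * of_int (- int (length (filter id bs) div 2))"
    using even by (simp add: real_of_nat_div)
  then have "d \<in> D_lattice 8"
    by (auto simp: D_lattice_def int_vecs_def d_def
        intro!: exI[of _ "- int (length (filter id bs) div 2)"])
  then show ?thesis by (simp add: hv_eq coset_def)
qed

lemma roots_coset_half8:
  "roots 8 (coset half8 (D_lattice 8))
     = half_vec ` set (sign_lists (\<lambda>bs. even (length (filter id bs))))"
  using coset_half8_norm2_eq_half_vec half_vec_mem_coset_half8 ip_half_vec_self
  by (auto simp: roots_def set_sign_lists)

lemma roots_Un: "roots m (A \<union> B) = roots m A \<union> roots m B"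
  by (auto simp: roots_def)

lemma roots_E8_lattice:
  "roots 8 E8_lattice
     = D_root ` D_root_params 8 \<union> half_vec ` set (sign_lists (\<lambda>bs. even (length (filter id bs))))"
  unfolding E8_lattice_eq roots_Un roots_D_lattice roots_coset_half8 ..

lemma roots_E7_lattice:
  "roots 8 E7_lattice
     = A_root ` off_diagonal {..<8} \<union> half_vec ` set (sign_lists (\<lambda>bs. length (filter id bs) = 4))"
proof -
  have "roots 8 E7_lattice = {a \<in> roots 8 E8_lattice. (\<Sum>i<8. a i) = 0}"
    by (auto simp: roots_def E7_lattice_def ip_half8)
  also have "\<dots> = {a \<in> D_root ` D_root_params 8. (\<Sum>i<8. a i) = 0}
      \<union> {a \<in> half_vec ` set (sign_lists (\<lambda>bs. even (length (filter id bs)))). (\<Sum>i<8. a i) = 0}"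
    unfolding roots_E8_lattice by blast
  also have "{a \<in> D_root ` D_root_params 8. (\<Sum>i<8. a i) = 0} = A_root ` off_diagonal {..<8}"
    using roots_int_vecs_sum_eq_0[of 8] by (simp add: roots_int_vecs)
  also have "{a \<in> half_vec ` set (sign_lists (\<lambda>bs. even (length (filter id bs)))). (\<Sum>i<8. a i) = 0}
      = half_vec ` set (sign_lists (\<lambda>bs. length (filter id bs) = 4))"
    using sum_half_vec by (auto simp: set_sign_lists)
  finally show ?thesis .
qed

lemma ip_minus_e0_minus_e1: "ip 8 a (\<lambda>i. if i < 2 then -1 else 0) = - (a 0 + a 1)"
  by (simp add: ip_def numeral_eq_Suc)

lemma roots_E6_lattice:
  "roots 8 E6_lattice
     = A_root ` (off_diagonal {0, 1} \<union> off_diagonal {2, 3, 4, 5, 6, 7})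
       \<union> half_vec ` set (sign_lists (\<lambda>bs. length (filter id bs) = 4 \<and> bs ! 0 \<noteq> bs ! 1))"
proof -
  have "roots 8 E6_lattice = {a \<in> roots 8 E7_lattice. a 0 + a 1 = 0}"
    by (auto simp: roots_def E6_lattice_def ip_minus_e0_minus_e1)
  also have "\<dots> = A_root ` {p \<in> off_diagonal {..<8}. A_root p 0 + A_root p 1 = 0}
      \<union> half_vec ` {bs \<in> set (sign_lists (\<lambda>bs. length (filter id bs) = 4)).
                      half_vec bs 0 + half_vec bs 1 = 0}"
    unfolding roots_E7_lattice by blast
  also have "{p \<in> off_diagonal {..<8}. A_root p 0 + A_root p 1 = 0}
      = off_diagonal {0, 1} \<union> off_diagonal {2, 3, 4, 5, 6, 7}"
  proof -
    have block: "i \<in> {2, 3, 4, 5, 6, 7} \<longleftrightarrow> 2 \<le> i \<and> i < 8" "i \<in> {0, 1} \<longleftrightarrow> i < 2" for i :: nat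
      by auto
    have "A_root (i, j) 0 + A_root (i, j) 1 = of_bool (i < 2) - of_bool (j < 2)" if "i \<noteq> j" for i j
      using that by (auto simp: pair_vec_def)
    then show ?thesis by (auto simp: off_diagonal_def block)
  qed
  also have "{bs \<in> set (sign_lists (\<lambda>bs. length (filter id bs) = 4)).
              half_vec bs 0 + half_vec bs 1 = 0}
      = set (sign_lists (\<lambda>bs. length (filter id bs) = 4 \<and> bs ! 0 \<noteq> bs ! 1))"
    by (auto simp: set_sign_lists half_vec_def)
  finally show ?thesis .
qed

definition sign_agreements :: "(bool list \<Rightarrow> bool) \<Rightarrow> nat \<Rightarrow> nat \<Rightarrow> nat" where
  "sign_agreements P i j = length (filter (\<lambda>bs. bs ! i = bs ! j) (sign_lists P))"

lemma length_sign_lists: "length (sign_lists P) = sign_agreements P 0 0"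
  by (simp add: sign_agreements_def)

lemma sum_power2_ip_half_vecs:
  "(\<Sum>a\<in>half_vec ` set (sign_lists P). (ip 8 x a)\<^sup>2)
     = (\<Sum>i<8. \<Sum>j<8. x i * x j * (sign_agreements P i j / 2 - length (sign_lists P) / 4))"
proof -
  have "inj_on half_vec (set (sign_lists P))"
    by (rule inj_on_subset[OF inj_on_half_vec]) (auto simp: set_sign_lists)
  then have "(\<Sum>a\<in>half_vec ` set (sign_lists P). (ip 8 x a)\<^sup>2)
      = (\<Sum>bs\<in>set (sign_lists P). \<Sum>i<8. \<Sum>j<8. x i * x j * (half_vec bs i * half_vec bs j))"
    by (simp add: sum.reindex ip_def power2_eq_square sum_product algebra_simps)
  also have "\<dots> = (\<Sum>i<8. \<Sum>j<8. x i * x j * (\<Sum>bs\<in>set (sign_lists P). half_vec bs i * half_vec bs j))"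
    by (simp add: sum_distrib_left sum.swap[of _ "set (sign_lists P)"])
  also have "\<dots> = (\<Sum>i<8. \<Sum>j<8. x i * x j * (sign_agreements P i j / 2 - length (sign_lists P) / 4))"
  proof (intro sum.cong refl)
    fix i j :: nat assume "i \<in> {..<8}" "j \<in> {..<8}"
    then have "(\<Sum>bs\<in>set (sign_lists P). half_vec bs i * half_vec bs j)
        = (\<Sum>bs\<in>set (sign_lists P). of_bool (bs ! i = bs ! j) / 2 - 1/4)"
      by (intro sum.cong refl) (auto simp: half_vec_def)
    also have "\<dots> = sign_agreements P i j / 2 - length (sign_lists P) / 4"
      using distinct_sign_lists[of P]
      by (simp add: sum_subtractf sum_divide_distrib[symmetric] sign_agreements_def
          distinct_length_filter distinct_card Int_commute)
    finally show "x i * x j * (\<Sum>bs\<in>set (sign_lists P). half_vec bs i * half_vec bs j)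
        = x i * x j * (sign_agreements P i j / 2 - length (sign_lists P) / 4)" by simp
  qed
  finally show ?thesis .
qed

lemma sign_agreements_E8:
  "\<forall>i<8. \<forall>j<8.
     sign_agreements (\<lambda>bs. even (length (filter id bs))) i j = (if i = j then 128 else 64)"
  unfolding sign_agreements_def sign_lists_def by code_simp

lemma sign_agreements_E7:
  "\<forall>i<8. \<forall>j<8. sign_agreements (\<lambda>bs. length (filter id bs) = 4) i j = (if i = j then 70 else 30)"
  unfolding sign_agreements_def sign_lists_def by code_simp

lemma sign_agreements_E6:
  "\<forall>i<8. \<forall>j<8. sign_agreements (\<lambda>bs. length (filter id bs) = 4 \<and> bs ! 0 \<noteq> bs ! 1) i j
     = (if i = j then 40 else if {i, j} = {0, 1} then 0 else if i < 2 \<or> j < 2 then 20 else 16)"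
  unfolding sign_agreements_def sign_lists_def by code_simp

lemma sum_lessThan_8: "(\<Sum>i<(8::nat). f i) = f 0 + f 1 + f 2 + f 3 + f 4 + f 5 + f 6 + (f 7 :: real)"
  by (simp add: lessThan_nat_numeral)

lemma sum_quadratic_form_two_values:
  fixes x :: "nat \<Rightarrow> real"
  shows "(\<Sum>i<n. \<Sum>j<n. x i * x j * (if i = j then \<alpha> else \<beta>))
       = (\<alpha> - \<beta>) * (\<Sum>i<n. (x i)\<^sup>2) + \<beta> * (\<Sum>i<n. x i)\<^sup>2"
proof -
  have "(\<Sum>i<n. \<Sum>j<n. x i * x j * (if i = j then \<alpha> else \<beta>))
      = (\<Sum>i<n. \<Sum>j<n. \<beta> * (x i * x j) + (if i = j then (\<alpha> - \<beta>) * (x i * x j) else 0))"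
    by (intro sum.cong refl) (simp add: algebra_simps)
  also have "\<dots> = (\<Sum>i<n. \<beta> * (x i * (\<Sum>j<n. x j)) + (\<alpha> - \<beta>) * (x i * x i))"
    by (intro sum.cong refl) (simp add: sum.distrib sum_distrib_left)
  also have "\<dots> = \<beta> * ((\<Sum>i<n. x i) * (\<Sum>j<n. x j)) + (\<alpha> - \<beta>) * (\<Sum>i<n. x i * x i)"
    by (simp only: sum.distrib sum_distrib_left[symmetric] sum_distrib_right[symmetric])
  finally show ?thesis by (simp add: power2_eq_square)
qed

lemma half_vec_0_notin_Ints: "half_vec bs 0 \<notin> \<int>"
proof
  assume "half_vec bs 0 \<in> \<int>"
  then obtain n :: int where "half_vec bs 0 = of_int n" by (auto elim: Ints_cases)
  then have "real_of_int (2 * n) = real_of_int (if bs ! 0 then -1 else 1)"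
    by (simp add: half_vec_def field_simps split: if_splits)
  then have "2 * n = (if bs ! 0 then -1 else 1)" by (simp only: of_int_eq_iff)
  then show False by (cases "bs ! 0") presburger+
qed

lemma int_vecs_disjoint_half_vecs: "A \<subseteq> int_vecs 8 \<Longrightarrow> A \<inter> half_vec ` B = {}"
  using half_vec_0_notin_Ints by (fastforce simp: int_vecs_def)

lemma D_roots_subset_int_vecs: "D_root ` D_root_params m \<subseteq> int_vecs m"
  unfolding roots_int_vecs[symmetric] by (auto simp: roots_def)

lemma A_roots_subset_int_vecs: "A_root ` off_diagonal {..<m} \<subseteq> int_vecs m"
  unfolding roots_int_vecs_sum_eq_0[symmetric] by (auto simp: roots_def)

lemma sum_power2_ip_roots_E8: "(\<Sum>a\<in>roots 8 E8_lattice. (ip 8 x a)\<^sup>2) = 60 * ip 8 x x"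
proof -
  have "(\<Sum>a\<in>half_vec ` set (sign_lists (\<lambda>bs. even (length (filter id bs)))). (ip 8 x a)\<^sup>2)
      = (\<Sum>i<8. \<Sum>j<8. x i * x j * (if i = j then 32 else 0))"
    unfolding sum_power2_ip_half_vecs length_sign_lists using sign_agreements_E8
    by (intro sum.cong refl) auto
  also have "\<dots> = 32 * ip 8 x x" by (simp add: sum_quadratic_form_two_values ip_self_eq_sum_power2)
  finally show ?thesis
    unfolding roots_E8_lattice
    using int_vecs_disjoint_half_vecs[OF D_roots_subset_int_vecs]
    by (simp add: sum.union_disjoint finite_D_root_params sum_power2_ip_D_roots)
qed

lemma sum_power2_ip_roots_E7:
  assumes "(\<Sum>i<8. x i) = 0"
  shows "(\<Sum>a\<in>roots 8 E7_lattice. (ip 8 x a)\<^sup>2) = 36 * ip 8 x x"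
proof -
  have "(\<Sum>a\<in>half_vec ` set (sign_lists (\<lambda>bs. length (filter id bs) = 4)). (ip 8 x a)\<^sup>2)
      = (\<Sum>i<8. \<Sum>j<8. x i * x j * (if i = j then 35/2 else -5/2))"
    unfolding sum_power2_ip_half_vecs length_sign_lists using sign_agreements_E7
    by (intro sum.cong refl) auto
  also have "\<dots> = 20 * ip 8 x x"
    using assms by (simp add: sum_quadratic_form_two_values ip_self_eq_sum_power2)
  moreover have "(\<Sum>a\<in>A_root ` off_diagonal {..<8}. (ip 8 x a)\<^sup>2) = 16 * ip 8 x x"
    using assms by (simp add: sum_power2_ip_A_roots ip_self_eq_sum_power2)
  ultimately show ?thesis
    unfolding roots_E7_lattice
    using int_vecs_disjoint_half_vecs[OF A_roots_subset_int_vecs]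
    by (simp add: sum.union_disjoint finite_off_diagonal)
qed

lemma sum_power2_ip_A1_A5_roots:
  "(\<Sum>a\<in>A_root ` (off_diagonal {0, 1} \<union> off_diagonal {2, 3, 4, 5, 6, 7}). (ip 8 x a)\<^sup>2)
     = 4 * ((x 0)\<^sup>2 + (x 1)\<^sup>2) - 2 * (x 0 + x 1)\<^sup>2
       + (12 * (\<Sum>i\<in>{2, 3, 4, 5, 6, 7}. (x i)\<^sup>2) - 2 * (\<Sum>i\<in>{2, 3, 4, 5, 6, 7}. x i)\<^sup>2)"
proof -
  let ?I = "{0, 1} :: nat set" and ?J = "{2, 3, 4, 5, 6, 7} :: nat set"
  have sub: "off_diagonal ?I \<subseteq> off_diagonal {..<8}" "off_diagonal ?J \<subseteq> off_diagonal {..<8}"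
    and "off_diagonal ?I \<inter> off_diagonal ?J = {}"
    by (auto simp: off_diagonal_def)
  then have disj: "A_root ` off_diagonal ?I \<inter> A_root ` off_diagonal ?J = {}"
    using inj_on_image_Int[OF inj_on_A_root sub] by simp
  have "(\<Sum>a\<in>A_root ` off_diagonal ?I. (ip 8 x a)\<^sup>2) = 4 * ((x 0)\<^sup>2 + (x 1)\<^sup>2) - 2 * (x 0 + x 1)\<^sup>2"
    using sum_power2_ip_A_roots[of ?I 8 x] by simp
  moreover have "(\<Sum>a\<in>A_root ` off_diagonal ?J. (ip 8 x a)\<^sup>2)
      = 12 * (\<Sum>i\<in>?J. (x i)\<^sup>2) - 2 * (\<Sum>i\<in>?J. x i)\<^sup>2"
    using sum_power2_ip_A_roots[of ?J 8 x] by simp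
  ultimately show ?thesis
    unfolding image_Un
    by (simp only: sum.union_disjoint[OF finite_imageI finite_imageI disj] finite_off_diagonal
        finite.emptyI finite_insert)
qed

lemma sum_power2_ip_half_vecs_E6:
  "(\<Sum>a\<in>half_vec ` set (sign_lists (\<lambda>bs. length (filter id bs) = 4 \<and> bs ! 0 \<noteq> bs ! 1)).
      (ip 8 x a)\<^sup>2)
     = 10 * (x 0 - x 1)\<^sup>2 + 12 * (\<Sum>i\<in>{2, 3, 4, 5, 6, 7}. (x i)\<^sup>2)
       - 2 * (\<Sum>i\<in>{2, 3, 4, 5, 6, 7}. x i)\<^sup>2" (is "?lhs = _")
proof -
  have "?lhs = (\<Sum>i<8. \<Sum>j<8. x i * x j *
      (if i = j then 10 else if {i, j} = {0, 1} then -10 else if i < 2 \<or> j < 2 then 0 else -2))"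
    unfolding sum_power2_ip_half_vecs length_sign_lists using sign_agreements_E6
    by (intro sum.cong refl) auto
  then show ?thesis by (simp add: sum_lessThan_8 doubleton_eq_iff power2_eq_square algebra_simps)
qed

lemma sum_power2_ip_roots_E6:
  assumes "(\<Sum>i<8. x i) = 0" "x 0 + x 1 = 0"
  shows "(\<Sum>a\<in>roots 8 E6_lattice. (ip 8 x a)\<^sup>2) = 24 * ip 8 x x"
proof -
  have "A_root ` (off_diagonal {0, 1} \<union> off_diagonal {2, 3, 4, 5, 6, 7}) \<subseteq> int_vecs 8"
    using A_roots_subset_int_vecs by (force simp: off_diagonal_def)
  then have "(\<Sum>a\<in>roots 8 E6_lattice. (ip 8 x a)\<^sup>2)
      = (\<Sum>a\<in>A_root ` (off_diagonal {0, 1} \<union> off_diagonal {2, 3, 4, 5, 6, 7}). (ip 8 x a)\<^sup>2)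
        + (\<Sum>a\<in>half_vec ` set (sign_lists (\<lambda>bs. length (filter id bs) = 4 \<and> bs ! 0 \<noteq> bs ! 1)).
             (ip 8 x a)\<^sup>2)"
    unfolding roots_E6_lattice
    using int_vecs_disjoint_half_vecs by (simp add: sum.union_disjoint finite_off_diagonal)
  also have "\<dots> = 24 * ip 8 x x"
  proof -
    have "x 2 + x 3 + x 4 + x 5 + x 6 + x 7 = 0" "x 1 = - x 0"
      using assms by (simp_all add: sum_lessThan_8)
    then show ?thesis
      unfolding sum_power2_ip_A1_A5_roots sum_power2_ip_half_vecs_E6
      by (simp add: ip_self_eq_sum_power2 sum_lessThan_8 power2_eq_square algebra_simps)
  qed
  finally show ?thesis .
qed

section \<open>Counting minimal decompositions\<close>

lemma integral_lattice_root_lattice: "integral_lattice (rt_dim t) (root_lattice t)"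
  using integral_lattice_A_lattice integral_lattice_D_lattice integral_lattice_E8_lattice
    integral_lattice_E7_lattice integral_lattice_E6_lattice
  by (cases t) simp_all

lemma finite_roots_root_lattice: "finite (roots (rt_dim t) (root_lattice t))"
  using roots_A_lattice roots_D_lattice roots_E8_lattice roots_E7_lattice roots_E6_lattice
  by (cases t) (simp_all add: finite_off_diagonal finite_D_root_params)

lemma sum_power2_ip_roots_root_lattice:
  assumes "x \<in> rat_span (root_lattice t)"
  shows "(\<Sum>a\<in>roots (rt_dim t) (root_lattice t). (ip (rt_dim t) x a)\<^sup>2)
       = 2 * real (coxeter_number t) * ip (rt_dim t) x x"
proof (cases t)
  case (TypeA n)
  then show ?thesis using assms sum_power2_ip_roots_A_lattice by simp
next
  case (TypeD n)
  then show ?thesis by (simp add: sum_power2_ip_roots_D_lattice)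
next
  case TypeE6
  have "ip 8 x half8 = 0" "ip 8 x (\<lambda>i. if i < 2 then -1 else 0) = 0"
    using assms TypeE6 by (auto intro: ip_rat_span_eq_0 simp: E6_lattice_def E7_lattice_def)
  then have "(\<Sum>i<8. x i) = 0" "x 0 + x 1 = 0"
    by (simp_all add: ip_half8 ip_minus_e0_minus_e1)
  then show ?thesis using TypeE6 sum_power2_ip_roots_E6 by simp
next
  case TypeE7
  have "ip 8 x half8 = 0"
    using assms TypeE7 by (auto intro: ip_rat_span_eq_0 simp: E7_lattice_def)
  then show ?thesis using TypeE7 sum_power2_ip_roots_E7 by (simp add: ip_half8)
next
  case TypeE8
  then show ?thesis by (simp add: sum_power2_ip_roots_E8)
qed

theorem mainTheorem1:
  fixes t :: root_type and g eta :: "nat \<Rightarrow> real" and k :: real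
  assumes "valid_type t"
    and "g \<in> dual_lattice t"
    and "k = Inf ((\<lambda>a. ip (rt_dim t) a a) ` coset g (root_lattice t))"
    and "eta \<in> coset g (root_lattice t)"
    and "ip (rt_dim t) eta eta = k"
  shows "real (card (X_set t g k eta)) = k * real (coxeter_number t)"
proof -
  interpret integral_lattice "rt_dim t" "root_lattice t"
    by (rule integral_lattice_root_lattice)
  have dual: "\<And>r. r \<in> root_lattice t \<Longrightarrow> ip (rt_dim t) g r \<in> \<int>"
    using assms(2) by (simp add: dual_lattice_def)
  have minimal: "\<forall>b\<in>coset g (root_lattice t). ip (rt_dim t) eta eta \<le> ip (rt_dim t) b b"
    unfolding assms(5) assms(3) by (auto intro!: cInf_lower bdd_belowI[of _ 0] ip_self_nonneg)
  have "eta \<in> rat_span (root_lattice t)"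
    using assms(2,4) coset_subset_rat_span by (auto simp: dual_lattice_def)
  then have "(\<Sum>a\<in>roots (rt_dim t) (root_lattice t). (ip (rt_dim t) eta a)\<^sup>2)
      = 2 * real (coxeter_number t) * ip (rt_dim t) eta eta"
    by (rule sum_power2_ip_roots_root_lattice)
  then show ?thesis
    using card_minimal_decompositions[OF finite_roots_root_lattice dual assms(4) minimal] assms(5)
    by (simp add: X_set_def)
qed

end
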